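(* Let $A$ be a T-brace and let $a\in\zeta_2(\star,A)$ be an element of finite order in $(A,+)$. Suppose that the torsion subgroup of the additive group of $\zeta(\star,A)$ is a $p$-group for some prime $p$. If the additive group of $\zeta_2(\star,A)$ is not periodic, then the additive order of $a\star a$ is at most $p$ (i.e. $p(a\star a)=0$).
   Context: A (left) brace is a set $A$ with two operations $+$ and $\cdot$ such that $(A,+)$ is an abelian group, $(A,\cdot)$ is a group, and $a(b+c)=ab+ac-a$ for all $a,b,c\in A$. Put $a\star b=ab-a-b$. A subbrace is a subset which is a subgroup of both $(A,+)$ and $(A,\cdot)$; a subbrace $L$ is an ideal if $a\star z, z\star a\in L$ for all $a\in A$, $z\in L$, and then the quotient brace $A/L$ is defined. $A$ is a T-brace if whenever $I$ is an ideal of $J$ and $J$ is an ideal of $A$, then $I$ is an ideal of $A$. The $\star$-center is $\zeta(\star,A)=\{a: a\star x=x\star a=0\ \forall x\}$; $\zeta_2(\star,A)$ is given by $\zeta_2(\star,A)/\zeta(\star,A)=\zeta(\star,A/\zeta(\star,A))$. *)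

theory Defs
  imports "HOL-Computational_Algebra.Primes"
begin

text \<open>A (left) brace on the whole type 'a: the additive abelian group is the
  type-class structure of 'a, the multiplication is the function mul.\<close>

definition brace_one :: "('a \<Rightarrow> 'a \<Rightarrow> 'a) \<Rightarrow> 'a" where
  "brace_one mul = (THE e. \<forall>a. mul e a = a \<and> mul a e = a)"

definition is_brace :: "('a::ab_group_add \<Rightarrow> 'a \<Rightarrow> 'a) \<Rightarrow> bool" where
  "is_brace mul \<longleftrightarrow>
     (\<forall>a b c. mul (mul a b) c = mul a (mul b c)) \<and>
     (\<exists>e. (\<forall>a. mul e a = a \<and> mul a e = a) \<and> (\<forall>a. \<exists>b. mul a b = e \<and> mul b a = e)) \<and>
     (\<forall>a b c. mul a (b + c) = mul a b + mul a c - a)"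

definition bstar :: "('a::ab_group_add \<Rightarrow> 'a \<Rightarrow> 'a) \<Rightarrow> 'a \<Rightarrow> 'a \<Rightarrow> 'a" where
  "bstar mul a b = mul a b - a - b"

definition subbrace :: "('a::ab_group_add \<Rightarrow> 'a \<Rightarrow> 'a) \<Rightarrow> 'a set \<Rightarrow> bool" where
  "subbrace mul S \<longleftrightarrow>
     0 \<in> S \<and> (\<forall>a\<in>S. \<forall>b\<in>S. a + b \<in> S) \<and> (\<forall>a\<in>S. - a \<in> S) \<and>
     brace_one mul \<in> S \<and> (\<forall>a\<in>S. \<forall>b\<in>S. mul a b \<in> S) \<and>
     (\<forall>a\<in>S. \<forall>b. mul a b = brace_one mul \<longrightarrow> b \<in> S)"

text \<open>I is an ideal of the subbrace J (J = UNIV: ideal of A).\<close>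
definition ideal_of :: "('a::ab_group_add \<Rightarrow> 'a \<Rightarrow> 'a) \<Rightarrow> 'a set \<Rightarrow> 'a set \<Rightarrow> bool" where
  "ideal_of mul J I \<longleftrightarrow> subbrace mul I \<and> I \<subseteq> J \<and>
     (\<forall>a\<in>J. \<forall>z\<in>I. bstar mul a z \<in> I \<and> bstar mul z a \<in> I)"

definition T_brace :: "('a::ab_group_add \<Rightarrow> 'a \<Rightarrow> 'a) \<Rightarrow> bool" where
  "T_brace mul \<longleftrightarrow> is_brace mul \<and>
     (\<forall>I J. ideal_of mul UNIV J \<and> ideal_of mul J I \<longrightarrow> ideal_of mul UNIV I)"

definition star_center :: "('a::ab_group_add \<Rightarrow> 'a \<Rightarrow> 'a) \<Rightarrow> 'a set" where
  "star_center mul = {a. \<forall>x. bstar mul a x = 0 \<and> bstar mul x a = 0}"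

text \<open>Second star-center, with the quotient A/zeta unfolded: a + zeta lies in the
  star-center of A/zeta iff a*x and x*a lie in zeta for all x.\<close>
definition star_center2 :: "('a::ab_group_add \<Rightarrow> 'a \<Rightarrow> 'a) \<Rightarrow> 'a set" where
  "star_center2 mul = {a. \<forall>x. bstar mul a x \<in> star_center mul \<and> bstar mul x a \<in> star_center mul}"

definition nsm :: "nat \<Rightarrow> 'a::ab_group_add \<Rightarrow> 'a" where
  "nsm n x = ((+) x ^^ n) 0"

definition add_finite_order :: "'a::ab_group_add \<Rightarrow> bool" where
  "add_finite_order x \<longleftrightarrow> (\<exists>n>0. nsm n x = 0)"

end

theory Submission
  imports Defs
begin

(* In a T-brace, if y \<in> \<zeta>\<^sub>2 and F \<subseteq> \<zeta> is an additive subgroup containing y \<star> y,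
   then every x \<star> y lies in \<langle>y\<rangle> + F: the group \<langle>y\<rangle> + \<zeta> is an ideal (as is every additive
   subgroup between \<zeta> and \<zeta>\<^sub>2), \<langle>y\<rangle> + F is an ideal of it, and the T-property makes
   \<langle>y\<rangle> + F an ideal of the whole brace.

   Take b \<in> \<zeta>\<^sub>2 of infinite additive order with b \<star> b of finite order, and N > 0 annihilating
   a \<star> b, b \<star> a and b \<star> b. For y = q a + N b one computes a \<star> y = q (a \<star> a) and
   y \<star> y = q\<^sup>2 (a \<star> a). If k q\<^sup>2 (a \<star> a) = 0, apply the above with F = {f \<in> \<zeta>. k f = 0}:
   the \<langle>y\<rangle>-coefficient of q (a \<star> a) must vanish because b has infinite order, so
   k q (a \<star> a) = 0. Hence the additive order of a \<star> a is squarefree; being a power of p, it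
   divides p. *)

lemma nsm_0 [simp]: "nsm 0 x = 0"
  by (simp add: nsm_def)

lemma nsm_Suc [simp]: "nsm (Suc n) x = x + nsm n x"
  by (simp add: nsm_def)

lemma nsm_1 [simp]: "nsm 1 x = x"
  by (simp add: nsm_def)

lemma nsm_add: "nsm (m + n) x = nsm m x + nsm n x"
  by (induction m) (simp_all add: algebra_simps)

lemma nsm_mult: "nsm (m * n) x = nsm m (nsm n x)"
  by (induction m) (simp_all add: nsm_add)

lemma nsm_commute: "nsm m (nsm n x) = nsm n (nsm m x)"
  by (metis mult.commute nsm_mult)

lemma nsm_zero [simp]: "nsm n 0 = 0"
  by (induction n) simp_all

lemma nsm_plus: "nsm n (x + y) = nsm n x + nsm n y"
  by (induction n) (simp_all add: algebra_simps)

lemma nsm_minus: "nsm n (- x) = - nsm n x"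
  using nsm_plus[of n x "- x"] by (simp add: eq_neg_iff_add_eq_0 add.commute)

lemma nsm_diff: "nsm n (x - y) = nsm n x - nsm n y"
  using nsm_plus[of n x "- y"] by (simp add: nsm_minus)

lemma nsm_inject:
  assumes "\<not> add_finite_order x" and "nsm i x = nsm j x"
  shows "i = j"
proof (rule ccontr)
  assume "i \<noteq> j"
  then obtain m d where "{i, j} = {m, m + d}" "d > 0"
    by (metis insert_commute less_imp_add_positive nat_neq_iff)
  then have "nsm d x = 0"
    using assms(2) by (auto simp: nsm_add doubleton_eq_iff)
  with \<open>d > 0\<close> assms(1) show False
    unfolding add_finite_order_def by blast
qed

definition add_subgroup :: "'a::ab_group_add set \<Rightarrow> bool" where
  "add_subgroup S \<longleftrightarrow> 0 \<in> S \<and> (\<forall>u\<in>S. \<forall>v\<in>S. u + v \<in> S) \<and> (\<forall>u\<in>S. - u \<in> S)"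

lemma add_subgroupI:
  assumes "0 \<in> S" "\<And>u v. u \<in> S \<Longrightarrow> v \<in> S \<Longrightarrow> u + v \<in> S" "\<And>u. u \<in> S \<Longrightarrow> - u \<in> S"
  shows "add_subgroup S"
  using assms by (simp add: add_subgroup_def)

lemma add_subgroup_zero: "add_subgroup S \<Longrightarrow> 0 \<in> S"
  and add_subgroup_add: "add_subgroup S \<Longrightarrow> u \<in> S \<Longrightarrow> v \<in> S \<Longrightarrow> u + v \<in> S"
  and add_subgroup_minus: "add_subgroup S \<Longrightarrow> u \<in> S \<Longrightarrow> - u \<in> S"
  by (simp_all add: add_subgroup_def)

lemma add_subgroup_diff: "add_subgroup S \<Longrightarrow> u \<in> S \<Longrightarrow> v \<in> S \<Longrightarrow> u - v \<in> S"
  using add_subgroup_add add_subgroup_minus by (metis diff_conv_add_uminus)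

lemma add_subgroup_nsm: "add_subgroup S \<Longrightarrow> u \<in> S \<Longrightarrow> nsm n u \<in> S"
  by (induction n) (simp_all add: add_subgroup_zero add_subgroup_add)

lemma add_subgroup_nsm_diff: "add_subgroup S \<Longrightarrow> u \<in> S \<Longrightarrow> nsm i u - nsm j u \<in> S"
  by (simp add: add_subgroup_diff add_subgroup_nsm)

text \<open>The subgroup \<langle>y\<rangle> + F, with the integer multiples of y written as differences of
  natural multiples.\<close>
definition cyclic_sum :: "'a::ab_group_add \<Rightarrow> 'a set \<Rightarrow> 'a set" where
  "cyclic_sum y F = {nsm i y - nsm j y + f | i j f. f \<in> F}"

lemma add_subgroup_cyclic_sum:
  assumes "add_subgroup F"
  shows "add_subgroup (cyclic_sum y F)"
proof (rule add_subgroupI)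
  show "0 \<in> cyclic_sum y F"
    using assms add_subgroup_zero unfolding cyclic_sum_def by force
next
  fix u v assume "u \<in> cyclic_sum y F" "v \<in> cyclic_sum y F"
  then obtain i j f i' j' f'
    where u: "u = nsm i y - nsm j y + f" and v: "v = nsm i' y - nsm j' y + f'"
      and "f \<in> F" "f' \<in> F"
    unfolding cyclic_sum_def by blast
  then have "u + v = nsm (i + i') y - nsm (j + j') y + (f + f')" "f + f' \<in> F"
    using assms unfolding u v by (simp_all add: nsm_add add_subgroup_add algebra_simps)
  then show "u + v \<in> cyclic_sum y F"
    unfolding cyclic_sum_def by blast
next
  fix u assume "u \<in> cyclic_sum y F"
  then obtain i j f where "u = nsm i y - nsm j y + f" "f \<in> F"
    unfolding cyclic_sum_def by blast
  then have "- u = nsm j y - nsm i y + (- f)" "- f \<in> F"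
    using assms by (simp_all add: add_subgroup_minus)
  then show "- u \<in> cyclic_sum y F"
    unfolding cyclic_sum_def by blast
qed

lemma subset_cyclic_sum: "F \<subseteq> cyclic_sum y F"
  unfolding cyclic_sum_def by force

lemma self_in_cyclic_sum:
  assumes "0 \<in> F"
  shows "y \<in> cyclic_sum y F"
proof -
  have "y = nsm 1 y - nsm 0 y + 0"
    by simp
  with assms show ?thesis
    unfolding cyclic_sum_def by blast
qed

lemma cyclic_sum_mono: "F \<subseteq> G \<Longrightarrow> cyclic_sum y F \<subseteq> cyclic_sum y G"
  unfolding cyclic_sum_def by blast

lemma cyclic_sum_subset:
  "add_subgroup S \<Longrightarrow> y \<in> S \<Longrightarrow> F \<subseteq> S \<Longrightarrow> cyclic_sum y F \<subseteq> S"
  unfolding cyclic_sum_def by (auto intro: add_subgroup_add add_subgroup_nsm_diff)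

locale left_brace =
  fixes mul :: "'a::ab_group_add \<Rightarrow> 'a \<Rightarrow> 'a"
  assumes is_brace: "is_brace mul"
begin

abbreviation star (infixl "\<star>" 70) where "x \<star> y \<equiv> bstar mul x y"
abbreviation "\<zeta> \<equiv> star_center mul"
abbreviation "\<zeta>\<^sub>2 \<equiv> star_center2 mul"

lemma mul_assoc: "mul (mul a b) c = mul a (mul b c)"
  and mul_add_right: "mul a (b + c) = mul a b + mul a c - a"
  using is_brace unfolding is_brace_def by blast+

lemma mul_0_right [simp]: "mul x 0 = x"
  using mul_add_right[of x 0 0] by simp

lemma mul_0_left [simp]: "mul 0 x = x"
proof -
  obtain e where e: "\<forall>a. mul e a = a \<and> mul a e = a"
    using is_brace unfolding is_brace_def by blast
  then have "mul e 0 = 0"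
    by blast
  then have "e = 0"
    by simp
  with e show ?thesis
    by blast
qed

lemma brace_one_eq_0: "brace_one mul = 0"
  unfolding brace_one_def
proof (rule the_equality)
  fix e assume "\<forall>a. mul e a = a \<and> mul a e = a"
  then have "mul e 0 = 0"
    by blast
  then show "e = 0"
    by simp
qed simp

lemma mul_eq_add_bstar: "mul x y = x + y + x \<star> y"
  by (simp add: bstar_def)

lemma bstar_0_left [simp]: "0 \<star> x = 0"
  and bstar_0_right [simp]: "x \<star> 0 = 0"
  by (simp_all add: bstar_def)

lemma bstar_add_right: "x \<star> (y + z) = x \<star> y + x \<star> z"
  by (simp add: bstar_def mul_add_right)

lemma bstar_minus_right: "x \<star> (- y) = - (x \<star> y)"
  using bstar_add_right[of x "- y" y] by (simp add: eq_neg_iff_add_eq_0)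

lemma bstar_nsm_right: "x \<star> nsm n y = nsm n (x \<star> y)"
  by (induction n) (simp_all add: bstar_add_right)

lemma bstar_mul_left: "mul u v \<star> w = u \<star> (v \<star> w) + v \<star> w + u \<star> w"
proof -
  have "mul u (mul v w) = mul u ((v \<star> w + v) + w)"
    by (simp add: mul_eq_add_bstar algebra_simps)
  also have "\<dots> = mul u (v \<star> w) + mul u v + mul u w - u - u"
    by (simp add: mul_add_right)
  finally have "mul (mul u v) w = mul u (v \<star> w) + mul u v + mul u w - u - u"
    by (simp add: mul_assoc)
  then show ?thesis
    by (simp add: bstar_def algebra_simps)
qed

lemma bstar_add_center_left:
  assumes "z \<in> \<zeta>"
  shows "(y + z) \<star> x = y \<star> x"
proof -
  have z: "y \<star> z = 0" "z \<star> x = 0"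
    using assms by (simp_all add: star_center_def)
  then have "mul y z = y + z"
    by (simp add: mul_eq_add_bstar)
  moreover have "mul y z \<star> x = y \<star> x"
    using z by (simp add: bstar_mul_left)
  ultimately show ?thesis
    by simp
qed

lemma bstar_add_left:
  assumes "b \<in> \<zeta>\<^sub>2"
  shows "(y + b) \<star> x = y \<star> x + b \<star> x"
proof -
  have "b \<star> x \<in> \<zeta>" and "y \<star> b \<in> \<zeta>"
    using assms by (simp_all add: star_center2_def)
  then have "y \<star> (b \<star> x) = 0"
    by (simp add: star_center_def)
  then have "mul y b \<star> x = b \<star> x + y \<star> x"
    by (simp add: bstar_mul_left)
  moreover have "mul y b \<star> x = (y + b) \<star> x"
    using \<open>y \<star> b \<in> \<zeta>\<close> by (metis bstar_add_center_left mul_eq_add_bstar)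
  ultimately show ?thesis
    by (simp add: add.commute)
qed

lemma bstar_minus_left: "b \<in> \<zeta>\<^sub>2 \<Longrightarrow> (- b) \<star> x = - (b \<star> x)"
  using bstar_add_left[of b "- b" x] by (simp add: eq_neg_iff_add_eq_0)

lemma bstar_nsm_left:
  assumes "b \<in> \<zeta>\<^sub>2"
  shows "nsm n b \<star> x = nsm n (b \<star> x)"
proof (induction n)
  case (Suc n)
  have "nsm (Suc n) b \<star> x = (nsm n b + b) \<star> x"
    by (simp add: add.commute)
  also have "\<dots> = nsm n (b \<star> x) + b \<star> x"
    using Suc by (simp only: bstar_add_left[OF assms])
  also have "\<dots> = nsm (Suc n) (b \<star> x)"
    by (simp add: add.commute)
  finally show ?case .
qed simp

lemma add_subgroup_star_center: "add_subgroup \<zeta>"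
proof (rule add_subgroupI)
  fix u v assume "u \<in> \<zeta>" "v \<in> \<zeta>"
  then show "u + v \<in> \<zeta>"
    by (simp add: star_center_def bstar_add_right bstar_add_center_left)
next
  fix u assume u: "u \<in> \<zeta>"
  then have "u \<in> \<zeta>\<^sub>2"
    by (simp add: star_center_def star_center2_def)
  with u show "- u \<in> \<zeta>"
    by (simp add: star_center_def bstar_minus_right bstar_minus_left)
qed (simp add: star_center_def)

lemma star_center_subset: "\<zeta> \<subseteq> \<zeta>\<^sub>2"
  using add_subgroup_zero[OF add_subgroup_star_center]
  by (auto simp: star_center_def star_center2_def)

lemma add_subgroup_star_center2: "add_subgroup \<zeta>\<^sub>2"
proof (rule add_subgroupI)
  show "0 \<in> \<zeta>\<^sub>2"
    using add_subgroup_zero[OF add_subgroup_star_center] star_center_subset by blast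
next
  fix u v assume "u \<in> \<zeta>\<^sub>2" "v \<in> \<zeta>\<^sub>2"
  then show "u + v \<in> \<zeta>\<^sub>2"
    using add_subgroup_add[OF add_subgroup_star_center]
    by (simp add: star_center2_def bstar_add_right bstar_add_left)
next
  fix u assume "u \<in> \<zeta>\<^sub>2"
  then show "- u \<in> \<zeta>\<^sub>2"
    using add_subgroup_minus[OF add_subgroup_star_center]
    by (simp add: star_center2_def bstar_minus_right bstar_minus_left)
qed

lemma bstar_diff_left:
  assumes "b \<in> \<zeta>\<^sub>2"
  shows "(y - b) \<star> x = y \<star> x - b \<star> x"
proof -
  have "- b \<in> \<zeta>\<^sub>2"
    using assms by (rule add_subgroup_minus[OF add_subgroup_star_center2])
  then show ?thesis
    using bstar_add_left[of "- b" y x] by (simp add: bstar_minus_left[OF assms])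
qed

lemma bstar_diff_right: "x \<star> (y - z) = x \<star> y - x \<star> z"
  using bstar_add_right[of x y "- z"] by (simp add: bstar_minus_right)

text \<open>The inverse of u in the multiplicative group is u \<star> u - u.\<close>
lemma subbrace_of_add_subgroup:
  assumes sub: "S \<subseteq> \<zeta>\<^sub>2" and S: "add_subgroup S"
    and closed: "\<And>u v. u \<in> S \<Longrightarrow> v \<in> S \<Longrightarrow> u \<star> v \<in> S"
  shows "subbrace mul S"
  unfolding subbrace_def brace_one_eq_0
proof (intro conjI ballI allI impI)
  fix u v assume "u \<in> S" "v \<in> S"
  then have "u + v + u \<star> v \<in> S"
    using S closed by (simp add: add_subgroup_add)
  then show "mul u v \<in> S"
    by (simp only: mul_eq_add_bstar)
next
  fix u w assume u: "u \<in> S" and w: "mul u w = 0"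
  then have uw: "u + w + u \<star> w = 0"
    by (simp only: mul_eq_add_bstar)
  have "u \<star> w \<in> \<zeta>"
    using u sub by (auto simp: star_center2_def)
  then have "u \<star> (u \<star> w) = 0"
    by (simp add: star_center_def)
  moreover have "u \<star> (u + w + u \<star> w) = 0"
    by (simp only: uw bstar_0_right)
  ultimately have "u \<star> w = - (u \<star> u)"
    by (simp add: bstar_add_right eq_neg_iff_add_eq_0 add.commute)
  with uw have "w = u \<star> u - u"
    by (simp add: eq_neg_iff_add_eq_0 algebra_simps)
  then show "w \<in> S"
    using u S closed by (simp add: add_subgroup_diff)
qed (use S in \<open>simp_all add: add_subgroup_zero add_subgroup_add add_subgroup_minus\<close>)

lemma ideal_of_add_subgroup_between:
  assumes "\<zeta> \<subseteq> S" "S \<subseteq> \<zeta>\<^sub>2" "add_subgroup S"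
  shows "ideal_of mul UNIV S"
proof -
  have "x \<star> v \<in> S \<and> v \<star> x \<in> S" if "v \<in> S" for x v
    using that assms(1,2) by (auto simp: star_center2_def)
  moreover from this have "subbrace mul S"
    using assms(2,3) by (intro subbrace_of_add_subgroup) auto
  ultimately show ?thesis
    unfolding ideal_of_def by blast
qed

lemma bstar_cyclic_sum_center:
  assumes "y \<in> \<zeta>\<^sub>2" and "u \<in> cyclic_sum y \<zeta>"
  obtains i j where "\<And>x. u \<star> x = nsm i (y \<star> x) - nsm j (y \<star> x)"
    and "\<And>x. x \<star> u = nsm i (x \<star> y) - nsm j (x \<star> y)"
proof -
  obtain i j z where u: "u = nsm i y - nsm j y + z" and z: "z \<in> \<zeta>"
    using assms(2) unfolding cyclic_sum_def by blast
  have "nsm j y \<in> \<zeta>\<^sub>2"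
    using assms(1) by (rule add_subgroup_nsm[OF add_subgroup_star_center2])
  then have "u \<star> x = nsm i (y \<star> x) - nsm j (y \<star> x)" for x
    unfolding u using z assms(1) by (simp add: bstar_add_center_left bstar_diff_left bstar_nsm_left)
  moreover have "x \<star> u = nsm i (x \<star> y) - nsm j (x \<star> y)" for x
    unfolding u using z by (simp add: bstar_add_right bstar_diff_right bstar_nsm_right star_center_def)
  ultimately show ?thesis
    using that by blast
qed

lemma T_brace_bstar_in_cyclic_sum:
  assumes T: "T_brace mul" and y: "y \<in> \<zeta>\<^sub>2"
    and F: "add_subgroup F" "F \<subseteq> \<zeta>" and yy: "y \<star> y \<in> F"
  shows "x \<star> y \<in> cyclic_sum y F"
proof -
  define J where "J = cyclic_sum y \<zeta>"
  define I where "I = cyclic_sum y F"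
  have J_sub: "J \<subseteq> \<zeta>\<^sub>2"
    unfolding J_def using add_subgroup_star_center2 y star_center_subset by (rule cyclic_sum_subset)
  have J_ideal: "ideal_of mul UNIV J"
    unfolding J_def
    by (intro ideal_of_add_subgroup_between subset_cyclic_sum add_subgroup_cyclic_sum
        add_subgroup_star_center J_sub[unfolded J_def])
  have I_sub: "I \<subseteq> J"
    unfolding I_def J_def using F(2) by (rule cyclic_sum_mono)
  have bstar_in_F: "u \<star> v \<in> F \<and> v \<star> u \<in> F" if "u \<in> J" and "v \<in> I" for u v
  proof -
    obtain i j where u: "\<And>x. u \<star> x = nsm i (y \<star> x) - nsm j (y \<star> x)"
      "\<And>x. x \<star> u = nsm i (x \<star> y) - nsm j (x \<star> y)"
      using y \<open>u \<in> J\<close> unfolding J_def by (blast intro: bstar_cyclic_sum_center)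
    obtain i' j' where v: "\<And>x. v \<star> x = nsm i' (y \<star> x) - nsm j' (y \<star> x)"
      "\<And>x. x \<star> v = nsm i' (x \<star> y) - nsm j' (x \<star> y)"
      using y \<open>v \<in> I\<close> I_sub unfolding J_def by (blast intro: bstar_cyclic_sum_center)
    have "y \<star> v \<in> F" and "y \<star> u \<in> F"
      using F(1) yy by (simp_all add: u v add_subgroup_nsm_diff)
    then show ?thesis
      using F(1) by (simp add: u v add_subgroup_nsm_diff)
  qed
  have "ideal_of mul J I"
    unfolding ideal_of_def
  proof (intro conjI ballI subbrace_of_add_subgroup I_sub)
    show "I \<subseteq> \<zeta>\<^sub>2"
      using I_sub J_sub by blast
    show "add_subgroup I"
      unfolding I_def using F(1) by (rule add_subgroup_cyclic_sum)
  qed (use bstar_in_F I_sub subset_cyclic_sum[of F y] in \<open>auto simp: I_def\<close>)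
  with T J_ideal have "ideal_of mul UNIV I"
    unfolding T_brace_def by blast
  moreover have "y \<in> I"
    unfolding I_def using F(1) by (intro self_in_cyclic_sum add_subgroup_zero)
  ultimately show ?thesis
    unfolding ideal_of_def I_def by blast
qed

lemma star_center2_nontorsion_witness:
  assumes "\<not> (\<forall>x\<in>\<zeta>\<^sub>2. add_finite_order x)"
  obtains b where "b \<in> \<zeta>\<^sub>2" "\<not> add_finite_order b" "add_finite_order (b \<star> b)"
proof -
  obtain b where b: "b \<in> \<zeta>\<^sub>2" "\<not> add_finite_order b"
    using assms by blast
  show ?thesis
  proof (cases "add_finite_order (b \<star> b)")
    case True
    with b that show ?thesis by blast
  next
    case False
    have "b \<star> b \<in> \<zeta>"
      using b(1) by (simp add: star_center2_def)
    moreover from this have "add_finite_order ((b \<star> b) \<star> (b \<star> b))"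
      unfolding add_finite_order_def star_center_def by (auto intro: exI[of _ 1])
    ultimately show ?thesis
      using that False star_center_subset by blast
  qed
qed

lemma bstar_nsm_add_nsm:
  fixes q N :: nat
  assumes a: "a \<in> \<zeta>\<^sub>2" and b: "b \<in> \<zeta>\<^sub>2"
    and "nsm N (a \<star> b) = 0" "nsm N (b \<star> a) = 0" "nsm N (b \<star> b) = 0"
  defines "y \<equiv> nsm q a + nsm N b"
  shows "a \<star> y = nsm q (a \<star> a)" and "y \<star> y = nsm q (nsm q (a \<star> a))"
proof -
  show ay: "a \<star> y = nsm q (a \<star> a)"
    unfolding y_def using assms by (simp add: bstar_add_right bstar_nsm_right)
  have "b \<star> y = nsm q (b \<star> a)"
    unfolding y_def using assms by (simp add: bstar_add_right bstar_nsm_right)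
  moreover have "nsm N b \<in> \<zeta>\<^sub>2"
    using b by (rule add_subgroup_nsm[OF add_subgroup_star_center2])
  ultimately have "y \<star> y = nsm q (a \<star> y) + nsm q (nsm N (b \<star> a))"
    unfolding y_def using a b
    by (simp add: bstar_add_left bstar_nsm_left nsm_commute[of N])
  then show "y \<star> y = nsm q (nsm q (a \<star> a))"
    using ay assms by simp
qed

lemma T_brace_bstar_self_cancel_square:
  assumes T: "T_brace mul" and a: "a \<in> \<zeta>\<^sub>2" "add_finite_order a"
    and b: "b \<in> \<zeta>\<^sub>2" "\<not> add_finite_order b" "add_finite_order (b \<star> b)"
    and kqq: "nsm (k * q * q) (a \<star> a) = 0"
  shows "nsm (k * q) (a \<star> a) = 0"
proof (cases "k = 0")
  case False
  obtain n where n: "n > 0" "nsm n a = 0"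
    using a(2) unfolding add_finite_order_def by blast
  obtain m where m: "m > 0" "nsm m (b \<star> b) = 0"
    using b(3) unfolding add_finite_order_def by blast
  define N where "N = n * m"
  have n_left: "nsm n (a \<star> x) = 0" for x
    using n a(1) by (simp add: bstar_nsm_left[symmetric])
  have n_right: "nsm n (x \<star> a) = 0" for x
    using n by (simp add: bstar_nsm_right[symmetric])
  have N: "nsm N (a \<star> b) = 0" "nsm N (b \<star> a) = 0" "nsm N (b \<star> b) = 0"
    using n_left n_right m unfolding N_def by (simp_all add: nsm_mult nsm_commute[of n])
  define y where "y = nsm q a + nsm N b"
  define F where "F = {f \<in> \<zeta>. nsm k f = 0}"
  have F: "add_subgroup F" "F \<subseteq> \<zeta>"
    unfolding F_def using add_subgroup_star_center
    by (auto intro!: add_subgroupI simp: add_subgroup_zero add_subgroup_add add_subgroup_minus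
        nsm_plus nsm_minus)
  have aa: "a \<star> a \<in> \<zeta>"
    using a(1) by (simp add: star_center2_def)
  have ay: "a \<star> y = nsm q (a \<star> a)" and yy: "y \<star> y = nsm q (nsm q (a \<star> a))"
    using bstar_nsm_add_nsm[OF a(1) b(1) N] unfolding y_def by blast+
  have "y \<star> y \<in> F"
    unfolding yy F_def using kqq aa add_subgroup_star_center
    by (simp add: add_subgroup_nsm nsm_mult[symmetric] mult.assoc)
  moreover have "y \<in> \<zeta>\<^sub>2"
    unfolding y_def using a(1) b(1) add_subgroup_star_center2
    by (simp add: add_subgroup_add add_subgroup_nsm)
  ultimately have "a \<star> y \<in> cyclic_sum y F"
    using T_brace_bstar_in_cyclic_sum[OF T _ F] by blast
  then obtain i j f where ij: "nsm q (a \<star> a) = nsm i y - nsm j y + f" and f: "f \<in> F"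
    unfolding ay cyclic_sum_def by blast
  have y_mult: "nsm (r * n) y = nsm (r * n * N) b" for r
    unfolding y_def using n by (simp add: nsm_plus nsm_mult nsm_commute[of n])
  have "nsm (k * n) (nsm i y) = nsm (k * n) (nsm j y)"
  proof -
    have "nsm (k * n) (nsm q (a \<star> a)) = 0"
      using n_left by (simp add: nsm_mult nsm_commute[of n])
    moreover have "nsm (k * n) f = 0"
      using f unfolding F_def by (simp add: mult.commute[of k n] nsm_mult)
    ultimately show ?thesis
      using ij by (simp add: nsm_plus nsm_diff)
  qed
  then have "nsm (i * k * n) y = nsm (j * k * n) y"
    by (simp add: nsm_mult[symmetric] ac_simps)
  then have "nsm (i * k * n * N) b = nsm (j * k * n * N) b"
    using y_mult[of "i * k"] y_mult[of "j * k"] by simp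
  then have "i * k * n * N = j * k * n * N"
    by (rule nsm_inject[OF b(2)])
  then have "i = j"
    using False n m unfolding N_def by simp
  with ij f show ?thesis
    unfolding F_def by (simp add: nsm_mult)
qed simp

end

lemma nsm_eq_0_of_power_eq_0:
  assumes square_free: "\<And>k. nsm (k * q * q) x = 0 \<Longrightarrow> nsm (k * q) x = 0"
    and "nsm (q ^ e) x = 0"
  shows "nsm q x = 0"
  using assms(2)
proof (induction e)
  case (Suc e)
  show ?case
  proof (cases e)
    case (Suc e')
    then have "nsm (q ^ e' * q * q) x = 0"
      using Suc.prems by (simp add: ac_simps)
    then have "nsm (q ^ e' * q) x = 0"
      by (rule square_free)
    then have "nsm (q ^ e) x = 0"
      by (simp add: \<open>e = Suc e'\<close> mult.commute)
    then show ?thesis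
      by (rule Suc.IH)
  qed (use Suc.prems in simp)
qed simp

theorem corollary4p6:
  fixes mul :: "'a::ab_group_add \<Rightarrow> 'a \<Rightarrow> 'a" and a :: 'a and p :: nat
  assumes "T_brace mul"
    and "a \<in> star_center2 mul"
    and "add_finite_order a"
    and "prime p"
    and "\<forall>x\<in>star_center mul. add_finite_order x \<longrightarrow> (\<exists>k. nsm (p ^ k) x = 0)"
    and "\<not> (\<forall>x\<in>star_center2 mul. add_finite_order x)"
  shows "nsm p (bstar mul a a) = 0"
proof -
  interpret left_brace mul
    using assms(1) by unfold_locales (simp add: T_brace_def)
  obtain b where b: "b \<in> \<zeta>\<^sub>2" "\<not> add_finite_order b" "add_finite_order (b \<star> b)"
    using assms(6) by (rule star_center2_nontorsion_witness)
  obtain n where n: "n > 0" "nsm n a = 0"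
    using assms(3) unfolding add_finite_order_def by blast
  have "a \<star> a \<in> \<zeta>"
    using assms(2) by (simp add: star_center2_def)
  moreover have "add_finite_order (a \<star> a)"
    unfolding add_finite_order_def using n assms(2) by (auto simp: bstar_nsm_left[symmetric])
  ultimately obtain e where "nsm (p ^ e) (a \<star> a) = 0"
    using assms(5) by blast
  then show ?thesis
    using T_brace_bstar_self_cancel_square[OF assms(1-3) b]
    by (rule nsm_eq_0_of_power_eq_0[rotated])
qed

end
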